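(* Let $e_0,e$ be two distinct symbols, and let $u_1,\dots,u_k,x_1,\dots,x_k,v$ be strings in which neither $e_0$ nor $e$ occurs. Let $$w = e_0\,u_1\,e\,u_2\,e\cdots e\,u_k\,e\;e_0\;x_1\,e\,x_2\,e\cdots e\,x_k\,e\,v.$$ Then every accepting computation $\varepsilon\,\|\,w\vdash^*\varepsilon\,\|\,\varepsilon$ of the queue automaton proceeds as $$\varepsilon\,\|\,w \vdash^* u_1eu_2e\cdots u_ke\,\|\,x_1ex_2e\cdots x_kev \vdash^* u_2e\cdots u_ke\,z_1\,\|\,x_2e\cdots x_kev \vdash^* \cdots$$ $$\cdots\vdash^* u_ke\,z_1\cdots z_{k-1}\,\|\,x_kev \vdash^* z_1\cdots z_k\,\|\,v \vdash^* \varepsilon\,\|\,\varepsilon$$ for some strings $z_1,\dots,z_k$; that is, for each $i$ the computation passes through the configuration $u_{i+1}e\cdots u_ke\,z_1\cdots z_i\,\|\,x_{i+1}e\cdots x_kev$, so that each $x_i$ is consumed by the corresponding $u_i$ with resultant $z_i$.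
   Context: Strings are over a finite alphabet; $\varepsilon$ is the empty string. The queue automaton: a configuration is written $Q\,\|\,x$ ($Q$ = queue contents, $x$ = remaining input). A single step $C\vdash C'$ is one of: from $Q\,\|\,\sigma x$ (with $\sigma$ a symbol) go to $Q\sigma\,\|\,x$ ($\sigma$ pushed onto the right end of the queue), or, if $Q=\sigma Q'$, go to $Q'\,\|\,x$ (input $\sigma$ matched against the leftmost queue symbol, which is popped). $C\vdash^*C'$ means reachable in zero or more steps; a computation is such a sequence of steps. A configuration $C$ is accepted if $C\vdash^*\varepsilon\,\|\,\varepsilon$, and an accepting computation of $w$ is a computation $\varepsilon\,\|\,w\vdash^*\varepsilon\,\|\,\varepsilon$. When a computation passes through configurations $u_1u_2u_3\,\|\,x_1x_2x_3 \vdash^* u_2u_3z_1\,\|\,x_2x_3 \vdash^* u_3z_1z_2\,\|\,x_3$ we say $x_2$ is consumed by $u_2$ with resultant $z_2$. *)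

theory Defs
  imports Main
begin

text \<open>A configuration Q || x is a pair (queue contents, remaining input).\<close>
type_synonym 'a config = "'a list \<times> 'a list"

inductive qstep :: "'a config \<Rightarrow> 'a config \<Rightarrow> bool" where
  push: "qstep (Q, \<sigma> # x) (Q @ [\<sigma>], x)"
| pop:  "qstep (\<sigma> # Q, \<sigma> # x) (Q, x)"

definition accepting_computation :: "'a list \<Rightarrow> 'a config list \<Rightarrow> bool" where
  "accepting_computation w cs \<longleftrightarrow>
     cs \<noteq> [] \<and> hd cs = ([], w) \<and> last cs = ([], []) \<and>
     (\<forall>j. Suc j < length cs \<longrightarrow> qstep (cs ! j) (cs ! Suc j))"

definition blk :: "'a \<Rightarrow> 'a list list \<Rightarrow> 'a list" where
  "blk e ss = concat (map (\<lambda>s. s @ [e]) ss)"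

end

theory Submission
  imports Defs "HOL-Library.Sublist"
begin

text \<open>Every symbol in the queue of an accepting computation must eventually be matched
  against an equal input symbol, so the queue never holds more copies of a symbol than the
  remaining input. For the separator \<open>e\<close> this count is tight at the start of each block,
  which forbids pushing the \<open>e\<close> that ends \<open>x\<^sub>i\<close>: it has to pop the \<open>e\<close> ending \<open>u\<^sub>i\<close>.
  Before that, the symbols of \<open>x\<^sub>i\<close> cannot pop past that \<open>e\<close>, so they pop all of \<open>u\<^sub>i\<close>
  and push the rest, the resultant \<open>z\<^sub>i\<close>, a subsequence of \<open>x\<^sub>i\<close>. The leading block
  delimited by \<open>e\<^sub>0\<close> is the case of an empty \<open>u\<close>, where nothing is popped and all of
  \<open>u\<^sub>1e\<dots>u\<^sub>ke\<close> is pushed.\<close>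

lemma blk_Nil [simp]: "blk e [] = []"
  by (simp add: blk_def)

lemma blk_Cons [simp]: "blk e (s # ss) = s @ e # blk e ss"
  by (simp add: blk_def)

lemma blk_append: "blk e (ss @ ts) = blk e ss @ blk e ts"
  by (simp add: blk_def)

lemma notin_set_blk: "a \<noteq> e \<Longrightarrow> \<forall>s\<in>set ss. a \<notin> set s \<Longrightarrow> a \<notin> set (blk e ss)"
  by (auto simp: blk_def)

lemma count_list_blk: "\<forall>s\<in>set ss. e \<notin> set s \<Longrightarrow> count_list (blk e ss) e = length ss"
  by (induction ss) auto

locale accepting_run =
  fixes w :: "'a list" and cs :: "'a config list"
  assumes accepting: "accepting_computation w cs"
begin

lemma run_step: "Suc j < length cs \<Longrightarrow> qstep (cs ! j) (cs ! Suc j)"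
  using accepting by (simp add: accepting_computation_def)

lemma run_nonempty: "cs \<noteq> []"
  using accepting by (simp add: accepting_computation_def)

lemma run_first: "cs ! 0 = ([], w)"
  using accepting unfolding accepting_computation_def by (metis hd_conv_nth)

lemma run_last: "cs ! (length cs - 1) = ([], [])"
  using accepting unfolding accepting_computation_def by (metis last_conv_nth)

lemma run_continues:
  assumes "j < length cs" and "snd (cs ! j) \<noteq> []"
  shows "Suc j < length cs"
proof (rule ccontr)
  assume "\<not> Suc j < length cs"
  with assms(1) have "j = length cs - 1"
    by simp
  with assms(2) run_last show False
    by simp
qed

lemma run_pushes_first:
  assumes "w = a # w'"
  shows "Suc 0 < length cs \<and> cs ! Suc 0 = ([a], w')"
proof -
  have next_0: "Suc 0 < length cs"
    using run_continues[of 0] run_nonempty run_first assms by simp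
  from run_step[OF next_0] run_first assms show ?thesis
    by cases (use next_0 in auto)
qed

lemma count_queue_le_count_input:
  assumes "j < length cs"
  shows "count_list (fst (cs ! j)) a \<le> count_list (snd (cs ! j)) a"
proof -
  from assms have "j \<le> length cs - 1" by simp
  then show ?thesis
  proof (induction j rule: inc_induct)
    case base
    from run_last show ?case
      by simp
  next
    case (step n)
    then have "qstep (cs ! n) (cs ! Suc n)"
      by (intro run_step) simp
    then show ?case
      using step.IH by cases auto
  qed
qed

lemma consume_block:
  assumes "j < length cs" and "cs ! j = (u @ e # R, x @ e # y)"
    and "e \<notin> set u" and "e \<notin> set x" and "count_list y e \<le> count_list R e"
  shows "\<exists>z. subseq z x \<and> length x = length u + length z \<and>
           j + Suc (length x) < length cs \<and> cs ! (j + Suc (length x)) = (R @ z, y)"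
  using assms
proof (induction x arbitrary: j u R)
  case Nil
  then have next_j: "Suc j < length cs"
    by (intro run_continues) auto
  from run_step[OF next_j] show ?case
  proof cases
    case push
    with Nil.prems have "cs ! Suc j = (u @ e # R @ [e], y)"
      by auto
    with count_queue_le_count_input[OF next_j, of e] Nil.prems(5) show ?thesis
      by simp
  next
    case pop
    with Nil.prems have "u = []" and "cs ! Suc j = (R, y)"
      by (cases u; auto)+
    with next_j show ?thesis
      by simp
  qed
next
  case (Cons a x)
  then have next_j: "Suc j < length cs"
    by (intro run_continues) auto
  have a: "a \<noteq> e" and x: "e \<notin> set x"
    using Cons.prems(4) by auto
  from run_step[OF next_j] show ?case
  proof cases
    case push
    with Cons.prems have "cs ! Suc j = (u @ e # (R @ [a]), x @ e # y)"
      by auto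
    moreover have "count_list y e \<le> count_list (R @ [a]) e"
      using Cons.prems(5) a by simp
    ultimately obtain z where "subseq z x" "length x = length u + length z"
      "Suc j + Suc (length x) < length cs" "cs ! (Suc j + Suc (length x)) = ((R @ [a]) @ z, y)"
      using Cons.IH[OF next_j _ Cons.prems(3) x] by blast
    then show ?thesis
      by (intro exI[of _ "a # z"]) auto
  next
    case pop
    with Cons.prems obtain u' where u: "u = a # u'"
      by (cases u) auto
    with pop Cons.prems have "cs ! Suc j = (u' @ e # R, x @ e # y)"
      by auto
    moreover have "e \<notin> set u'"
      using Cons.prems(3) u by simp
    ultimately obtain z where "subseq z x" "length x = length u' + length z"
      "Suc j + Suc (length x) < length cs" "cs ! (Suc j + Suc (length x)) = (R @ z, y)"
      using Cons.IH[OF next_j _ _ x Cons.prems(5)] by blast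
    with u show ?thesis
      by (intro exI[of _ z]) auto
  qed
qed

lemma consume_leading_block:
  assumes "j < length cs" and "cs ! j = (e # R, x @ e # y)"
    and "e \<notin> set x" and "count_list y e \<le> count_list R e"
  shows "j + Suc (length x) < length cs \<and> cs ! (j + Suc (length x)) = (R @ x, y)"
  using consume_block[of j "[]" e R x y] assms subseq_same_length by fastforce

lemma consume_blk_Cons:
  assumes "j < length cs"
    and "cs ! j = (blk e (u # us) @ q, blk e (x # xs) @ v)"
    and "length us = length xs"
    and "\<forall>s \<in> set (u # us) \<union> set (x # xs). e \<notin> set s"
    and "e \<notin> set q" and "e \<notin> set v"
  shows "\<exists>z. e \<notin> set z \<and> j + Suc (length x) < length cs \<and>
           cs ! (j + Suc (length x)) = (blk e us @ q @ z, blk e xs @ v)"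
proof -
  have "count_list (blk e xs @ v) e \<le> count_list (blk e us @ q) e"
    using assms(3-6) by (simp add: count_list_blk)
  with assms obtain z where "subseq z x" "j + Suc (length x) < length cs"
    "cs ! (j + Suc (length x)) = (blk e us @ q @ z, blk e xs @ v)"
    using consume_block[of j u e "blk e us @ q" x "blk e xs @ v"] by auto
  moreover from \<open>subseq z x\<close> assms(4) have "e \<notin> set z"
    by (auto elim: list_emb_set)
  ultimately show ?thesis
    by blast
qed

lemma consume_blks:
  assumes "length us = length xs"
    and "\<forall>s \<in> set us \<union> set xs. e \<notin> set s" and "e \<notin> set q" and "e \<notin> set v"
    and "j < length cs" and "cs ! j = (blk e us @ q, blk e xs @ v)"
  shows "\<exists>zs. length zs = length us \<and>
           (\<forall>i \<le> length us. j + length (blk e (take i xs)) < length cs \<and>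
              cs ! (j + length (blk e (take i xs))) =
                (blk e (drop i us) @ q @ concat (take i zs), blk e (drop i xs) @ v))"
  using assms
proof (induction us xs arbitrary: j q rule: list_induct2)
  case Nil
  then show ?case
    by simp
next
  case (Cons u us x xs)
  then obtain z where z: "e \<notin> set z" "j + Suc (length x) < length cs"
    "cs ! (j + Suc (length x)) = (blk e us @ q @ z, blk e xs @ v)"
    using consume_blk_Cons[of j e u us q x xs v] by auto
  then obtain zs where zs: "length zs = length us"
    "\<forall>i \<le> length us. j + Suc (length x) + length (blk e (take i xs)) < length cs \<and>
       cs ! (j + Suc (length x) + length (blk e (take i xs))) =
         (blk e (drop i us) @ (q @ z) @ concat (take i zs), blk e (drop i xs) @ v)"
    using Cons.IH[of "q @ z" "j + Suc (length x)"] Cons.prems by auto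
  have "j + length (blk e (take i (x # xs))) < length cs \<and>
      cs ! (j + length (blk e (take i (x # xs)))) =
        (blk e (drop i (u # us)) @ q @ concat (take i (z # zs)), blk e (drop i (x # xs)) @ v)"
    if "i \<le> length (u # us)" for i
  proof (cases i)
    case 0
    with Cons.prems show ?thesis
      by simp
  next
    case (Suc i')
    with that zs(2)[rule_format, of i'] show ?thesis
      by (simp add: add.assoc)
  qed
  with zs(1) show ?case
    by (intro exI[of _ "z # zs"]) auto
qed

end

theorem lemma2:
  fixes e0 e :: 'a and us xs :: "'a list list" and v :: "'a list"
    and k :: nat and cs :: "'a config list"
  assumes "e0 \<noteq> e"
    and "length us = k" and "length xs = k"
    and "\<forall>s \<in> set us. e0 \<notin> set s \<and> e \<notin> set s"
    and "\<forall>s \<in> set xs. e0 \<notin> set s \<and> e \<notin> set s"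
    and "e0 \<notin> set v" and "e \<notin> set v"
    and "accepting_computation ([e0] @ blk e us @ [e0] @ blk e xs @ v) cs"
  shows "\<exists>zs :: 'a list list. length zs = k \<and>
           (\<exists>js :: nat \<Rightarrow> nat.
              (\<forall>i \<le> k. js i < length cs \<and>
                 cs ! js i = (blk e (drop i us) @ concat (take i zs), blk e (drop i xs) @ v)) \<and>
              (\<forall>i < k. js i \<le> js (Suc i)))"
proof -
  interpret accepting_run "[e0] @ blk e us @ [e0] @ blk e xs @ v" cs
    using assms(8) by unfold_locales
  let ?j0 = "Suc (Suc (length (blk e us)))"
  have "e0 \<notin> set (blk e us)" and "e0 \<notin> set (blk e xs @ v)"
    using assms(1,4-6) notin_set_blk[of e0 e] by auto
  then have "?j0 < length cs \<and> cs ! ?j0 = (blk e us @ [], blk e xs @ v)"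
    using run_pushes_first consume_leading_block[of "Suc 0" e0 "[]" "blk e us" "blk e xs @ v"]
    by auto
  then obtain zs where "length zs = k"
    "\<forall>i \<le> k. ?j0 + length (blk e (take i xs)) < length cs \<and>
       cs ! (?j0 + length (blk e (take i xs))) =
         (blk e (drop i us) @ concat (take i zs), blk e (drop i xs) @ v)"
    using consume_blks[of us xs e "[]" v ?j0] assms(2-5,7) by auto
  moreover have "length (blk e (take i xs)) \<le> length (blk e (take (Suc i) xs))" for i
    by (cases "i < length xs") (simp_all add: take_Suc_conv_app_nth blk_append)
  ultimately show ?thesis
    by (intro exI[of _ zs] conjI exI[of _ "\<lambda>i. ?j0 + length (blk e (take i xs))"]) auto
qed

end
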